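(* Let $\epsilon>0$, $\alpha\in(0,1)$, $0<\theta_0<\theta_1<1$ and $n\geq 1$ be given. Observe $X\sim \mathrm{Binom}(n,\theta)$, where $\theta$ is unknown. Let $N_0\sim \mathrm{Tulap}(0,b=e^{-\epsilon},0)$, and define the decision rule $\phi^*:\mathbb{Z}\to[0,1]$ by $\phi^*_x=F_{N_0}(x-m)$, where $m\in\mathbb{R}$ is chosen such that $\mathbb{E}_{\theta_0}\phi^*_X=\alpha$. Then $\phi^*$ is the uniformly most powerful level-$\alpha$ test of $H_0:\theta=\theta_0$ versus $H_1:\theta=\theta_1$ among $\mathscr D^n_{\epsilon,0}$.
   Context: Nearest integer function: for $t\in\mathbb{R}$, $[t]$ is the integer nearest to $t$, where for $z\in\mathbb{Z}$, $[z+1/2]$ is defined to be the nearest even integer. Tulap distribution: for $m\in\mathbb{R}$, $b\in(0,1)$, $q\in[0,1)$, $N_0\sim\mathrm{Tulap}(m,b,0)$ has cdf $F_{N_0}(x)=\frac{b^{-[x-m]}}{1+b}\big(b+(x-m-[x-m]+\tfrac12)(1-b)\big)$ for $x\leq [m]$ and $F_{N_0}(x)=1-\frac{b^{[x-m]}}{1+b}\big(b+([x-m]-(x-m)+\tfrac12)(1-b)\big)$ for $x>[m]$; and $N\sim \mathrm{Tulap}(m,b,q)$ has cdf $F_N(x)=\frac{F_{N_0}(x)-q/2}{1-q}\,I\{q/2\leq F_{N_0}(x)\leq 1-q/2\}+I\{F_{N_0}(x)>1-q/2\}$. A (randomized) test is a function $\phi:\{0,1,\dots,n\}\to[0,1]$,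 $\phi_x$ being the probability of rejecting $H_0$ when $X=x$; its power at $\theta$ is $\mathbb{E}_\theta\phi_X$. For $\epsilon>0,\delta\ge 0$, $\mathscr D^n_{\epsilon,\delta}$ is the set of tests $\phi$ such that for all $x\in\{0,\dots,n-1\}$: $\phi_x\le e^\epsilon\phi_{x+1}+\delta$, $\phi_{x+1}\le e^\epsilon\phi_x+\delta$, $1-\phi_x\le e^\epsilon(1-\phi_{x+1})+\delta$, $1-\phi_{x+1}\le e^\epsilon(1-\phi_x)+\delta$ (these are the tests satisfying $(\epsilon,\delta)$-differential privacy as functions of the count). A test $\phi^*\in\Phi$ is uniformly most powerful (UMP) at level $\alpha$ among $\Phi$ if $\sup_{\theta\in\Theta_0}\mathbb{E}_\theta\phi^*\le\alpha$ and for every $\phi\in\Phi$ with $\sup_{\theta\in\Theta_0}\mathbb{E}_\theta\phi\le\alpha$, $\mathbb{E}_\theta\phi^*\ge\mathbb{E}_\theta\phi$ for all $\theta$ in the alternative. *)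

theory Defs
  imports Complex_Main
begin

definition nearest_int :: "real \<Rightarrow> int" where
  "nearest_int t =
     (if t - of_int \<lfloor>t\<rfloor> < 1/2 then \<lfloor>t\<rfloor>
      else if t - of_int \<lfloor>t\<rfloor> > 1/2 then \<lfloor>t\<rfloor> + 1
      else if even \<lfloor>t\<rfloor> then \<lfloor>t\<rfloor> else \<lfloor>t\<rfloor> + 1)"

definition tulap0_cdf :: "real \<Rightarrow> real \<Rightarrow> real \<Rightarrow> real" where
  "tulap0_cdf m b x =
     (if x \<le> of_int (nearest_int m) then
        b powi (- nearest_int (x - m)) / (1 + b) *
          (b + (x - m - of_int (nearest_int (x - m)) + 1/2) * (1 - b))
      else
        1 - b powi (nearest_int (x - m)) / (1 + b) *
          (b + (of_int (nearest_int (x - m)) - (x - m) + 1/2) * (1 - b)))"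

definition tulap_cdf :: "real \<Rightarrow> real \<Rightarrow> real \<Rightarrow> real \<Rightarrow> real" where
  "tulap_cdf m b q x =
     (let F0 = tulap0_cdf m b x in
       (if q/2 \<le> F0 \<and> F0 \<le> 1 - q/2 then (F0 - q/2) / (1 - q) else 0)
       + (if F0 > 1 - q/2 then 1 else 0))"

definition binom_power :: "nat \<Rightarrow> real \<Rightarrow> (nat \<Rightarrow> real) \<Rightarrow> real" where
  "binom_power n \<theta> \<phi> =
     (\<Sum>x = 0..n. real (n choose x) * \<theta> ^ x * (1 - \<theta>) ^ (n - x) * \<phi> x)"

text \<open>Tests on {0..n} (values outside {0..n} are irrelevant).\<close>
definition is_test :: "nat \<Rightarrow> (nat \<Rightarrow> real) \<Rightarrow> bool" where
  "is_test n \<phi> \<longleftrightarrow> (\<forall>x\<le>n. 0 \<le> \<phi> x \<and> \<phi> x \<le> 1)"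

definition DP_tests :: "nat \<Rightarrow> real \<Rightarrow> real \<Rightarrow> (nat \<Rightarrow> real) set" where
  "DP_tests n \<epsilon> \<delta> = {\<phi>. is_test n \<phi> \<and>
     (\<forall>x<n. \<phi> x \<le> exp \<epsilon> * \<phi> (x + 1) + \<delta>
          \<and> \<phi> (x + 1) \<le> exp \<epsilon> * \<phi> x + \<delta>
          \<and> 1 - \<phi> x \<le> exp \<epsilon> * (1 - \<phi> (x + 1)) + \<delta>
          \<and> 1 - \<phi> (x + 1) \<le> exp \<epsilon> * (1 - \<phi> x) + \<delta>)}"

definition is_UMP :: "nat \<Rightarrow> (nat \<Rightarrow> real) set \<Rightarrow> real set \<Rightarrow> real set \<Rightarrow> real
                      \<Rightarrow> (nat \<Rightarrow> real) \<Rightarrow> bool" where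
  "is_UMP n \<Phi> \<Theta>0 \<Theta>1 \<alpha> \<phi> \<longleftrightarrow>
     \<phi> \<in> \<Phi> \<and> (\<forall>\<theta>\<in>\<Theta>0. binom_power n \<theta> \<phi> \<le> \<alpha>) \<and>
     (\<forall>\<psi>\<in>\<Phi>. (\<forall>\<theta>\<in>\<Theta>0. binom_power n \<theta> \<psi> \<le> \<alpha>) \<longrightarrow>
        (\<forall>\<theta>\<in>\<Theta>1. binom_power n \<theta> \<phi> \<ge> binom_power n \<theta> \<psi>))"

end

theory Submission
  imports Defs
begin

text \<open>With \<open>b = exp (- \<epsilon>)\<close>, the Tulap cdf \<open>F\<close> satisfies
  \<open>F (t + 1) = min (F t / b) (1 - b * (1 - F t))\<close>: each unit step increases it by the largest
  amount that \<open>\<epsilon>\<close>-differential privacy permits. Hence \<open>\<phi>*\<close> is an \<open>\<epsilon>\<close>-DP test, and every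
  \<open>\<epsilon>\<close>-DP test \<open>\<psi>\<close> that lies below \<open>\<phi>*\<close> at some count stays below it at all larger counts,
  so \<open>\<phi>* - \<psi>\<close> changes sign at most once, from negative to nonnegative. As the binomial
  likelihood ratio of \<open>\<theta>1\<close> against \<open>\<theta>0\<close> is increasing in the count, the Karlin-Rubin
  argument carries the size inequality \<open>E\<^sub>\<theta>\<^sub>0 (\<phi>* - \<psi>) \<ge> 0\<close> over to \<open>\<theta>1\<close>.\<close>

text \<open>The largest value of \<open>\<psi> (x + 1)\<close> that the DP constraints with \<open>b = exp (- \<epsilon>)\<close> and
  \<open>\<delta> = 0\<close> allow, given \<open>\<psi> x = p\<close>.\<close>
definition dp_max_next :: "real \<Rightarrow> real \<Rightarrow> real" where
  "dp_max_next b p = min (p / b) (1 - b * (1 - p))"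

lemma dp_max_next_ge:
  assumes "0 < b" "b \<le> 1" "0 \<le> p" "p \<le> 1"
  shows "p \<le> dp_max_next b p"
proof -
  have "p \<le> p / b" using assms by (simp add: le_divide_eq mult_left_le)
  moreover have "b * (1 - p) \<le> 1 - p" using assms by (simp add: mult_left_le_one_le)
  ultimately show ?thesis unfolding dp_max_next_def by simp
qed

lemma dp_max_next_mono:
  assumes "0 < b" "p \<le> q"
  shows "dp_max_next b p \<le> dp_max_next b q"
proof -
  have "p / b \<le> q / b" using assms by (simp add: divide_right_mono)
  moreover have "b * (1 - q) \<le> b * (1 - p)" using assms by (simp add: mult_left_mono)
  ultimately show ?thesis unfolding dp_max_next_def by linarith
qed

lemma dp_max_next_lower_tail:
  assumes "0 < b" "b < 1" "0 \<le> X" "X \<le> 1"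
  shows "dp_max_next b (b * X / (1 + b)) = X / (1 + b)"
proof -
  have "b * b \<le> 1" using assms by (simp add: mult_le_one)
  then have "X * (1 - b * b) \<le> 1 - b * b" using assms by (simp add: mult_left_le_one_le)
  then have "X / (1 + b) \<le> (1 - b * b + b * b * X) / (1 + b)"
    using assms by (intro divide_right_mono) (auto simp: algebra_simps)
  also have "\<dots> = 1 - b * (1 - b * X / (1 + b))"
    using assms by (simp add: field_simps)
  finally have "X / (1 + b) \<le> 1 - b * (1 - b * X / (1 + b))" .
  then show ?thesis using assms unfolding dp_max_next_def by (simp add: min_def)
qed

lemma dp_max_next_upper_tail:
  assumes "0 < b" "b < 1" "0 \<le> X" "X \<le> 1"
  shows "dp_max_next b (1 - X / (1 + b)) = 1 - b * X / (1 + b)"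
proof -
  have "b * b \<le> 1" using assms by (simp add: mult_le_one)
  then have "X * (1 - b * b) \<le> 1 - b * b" using assms by (simp add: mult_left_le_one_le)
  then have "(b + b * b - b * b * X) / (b * (1 + b)) \<le> (1 + b - X) / (b * (1 + b))"
    using assms by (intro divide_right_mono) (auto simp: algebra_simps)
  moreover have "1 - b * X / (1 + b) = (b + b * b - b * b * X) / (b * (1 + b))"
    using assms by (simp add: divide_simps) (simp add: algebra_simps)
  moreover have "(1 - X / (1 + b)) / b = (1 + b - X) / (b * (1 + b))"
    using assms by (simp add: field_simps)
  ultimately have "1 - b * X / (1 + b) \<le> (1 - X / (1 + b)) / b" by simp
  then show ?thesis unfolding dp_max_next_def by (simp add: min_def)
qed

lemma DP_tests_step_le:
  assumes "\<psi> \<in> DP_tests n \<epsilon> 0" "x < n"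
  shows "\<psi> (x + 1) \<le> dp_max_next (exp (- \<epsilon>)) (\<psi> x)"
proof -
  have "\<psi> (x + 1) \<le> exp \<epsilon> * \<psi> x" "1 - \<psi> x \<le> exp \<epsilon> * (1 - \<psi> (x + 1))"
    using assms unfolding DP_tests_def by auto
  then show ?thesis
    unfolding dp_max_next_def by (simp add: exp_minus field_simps)
qed

lemma DP_tests_dominated:
  assumes "\<psi> \<in> DP_tests n \<epsilon> 0"
    and "\<And>x. x < n \<Longrightarrow> \<phi> (x + 1) = dp_max_next (exp (- \<epsilon>)) (\<phi> x)"
    and "\<psi> k \<le> \<phi> k" "k \<le> y" "y \<le> n"
  shows "\<psi> y \<le> \<phi> y"
  using assms(4,5)
proof (induction y rule: dec_induct)
  case base
  show ?case using assms(3) .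
next
  case (step y)
  then have "\<psi> (y + 1) \<le> dp_max_next (exp (- \<epsilon>)) (\<psi> y)"
    using DP_tests_step_le[OF assms(1)] by simp
  also have "\<dots> \<le> dp_max_next (exp (- \<epsilon>)) (\<phi> y)"
    using step by (simp add: dp_max_next_mono)
  also have "\<dots> = \<phi> (y + 1)"
    using step assms(2) by simp
  finally show ?case by simp
qed

lemma dp_max_next_in_DP_tests:
  assumes "0 \<le> \<epsilon>" and bounds: "\<And>x. x \<le> n \<Longrightarrow> 0 \<le> \<phi> x \<and> \<phi> x \<le> 1"
    and step: "\<And>x. x < n \<Longrightarrow> \<phi> (x + 1) = dp_max_next (exp (- \<epsilon>)) (\<phi> x)"
  shows "\<phi> \<in> DP_tests n \<epsilon> 0"
  unfolding DP_tests_def is_test_def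
proof (intro CollectI conjI allI impI)
  fix x assume "x < n"
  then have x: "0 \<le> \<phi> x" "\<phi> x \<le> 1" "0 \<le> \<phi> (x + 1)" "\<phi> (x + 1) \<le> 1"
    using bounds by auto
  have grow: "a \<le> exp \<epsilon> * a" if "0 \<le> a" for a
    using assms(1) that by (simp add: mult_le_cancel_right1)
  have up: "\<phi> x \<le> \<phi> (x + 1)"
    using step[OF \<open>x < n\<close>] dp_max_next_ge[of "exp (- \<epsilon>)" "\<phi> x"] x assms(1) by simp
  have "\<phi> (x + 1) \<le> \<phi> x / exp (- \<epsilon>)" "exp (- \<epsilon>) * (1 - \<phi> x) \<le> 1 - \<phi> (x + 1)"
    using step[OF \<open>x < n\<close>] unfolding dp_max_next_def by auto
  then have "\<phi> (x + 1) \<le> exp \<epsilon> * \<phi> x" "1 - \<phi> x \<le> exp \<epsilon> * (1 - \<phi> (x + 1))"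
    by (simp_all add: exp_minus field_simps)
  moreover have "\<phi> x \<le> exp \<epsilon> * \<phi> (x + 1)" "1 - \<phi> (x + 1) \<le> exp \<epsilon> * (1 - \<phi> x)"
    using up x grow[of "\<phi> (x + 1)"] grow[of "1 - \<phi> x"] by linarith+
  ultimately show "\<phi> x \<le> exp \<epsilon> * \<phi> (x + 1) + 0" "\<phi> (x + 1) \<le> exp \<epsilon> * \<phi> x + 0"
    "1 - \<phi> x \<le> exp \<epsilon> * (1 - \<phi> (x + 1)) + 0" "1 - \<phi> (x + 1) \<le> exp \<epsilon> * (1 - \<phi> x) + 0"
    by simp_all
qed (use bounds in auto)

text \<open>\<open>tulap0_cdf 0 b (k + u)\<close> for \<open>\<bar>u\<bar> \<le> 1/2\<close>. At half-integers both neighbours \<open>k\<close> give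
  the same value, so unlike \<open>nearest_int\<close> the index can be shifted along with \<open>t \<mapsto> t + 1\<close>.\<close>
definition tulap_piece :: "real \<Rightarrow> int \<Rightarrow> real \<Rightarrow> real" where
  "tulap_piece b k u =
     (if k \<le> 0 then b powi (- k) / (1 + b) * (b + (u + 1/2) * (1 - b))
      else 1 - b powi k / (1 + b) * (b + (1/2 - u) * (1 - b)))"

lemma nearest_int_dist: "\<bar>t - of_int (nearest_int t)\<bar> \<le> 1/2"
  unfolding nearest_int_def using floor_correct[of t] by (auto split: if_splits)

lemma nearest_int_zero [simp]: "nearest_int 0 = 0"
  unfolding nearest_int_def by simp

lemma tulap_piece_zero:
  "0 < b \<Longrightarrow> tulap_piece b 0 u = 1 - 1 / (1 + b) * (b + (1/2 - u) * (1 - b))"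
  unfolding tulap_piece_def by (simp add: field_simps)

lemma tulap_piece_half:
  assumes "0 < b"
  shows "tulap_piece b k (1/2) = tulap_piece b (k + 1) (- 1/2)"
proof -
  consider "k \<le> -1" | "k = 0" | "k \<ge> 1" by linarith
  then show ?thesis
  proof cases
    case 1
    have "b powi (- k) = b * b powi (- (k + 1))"
      using assms power_int_add_1'[of b "- (k + 1)"] by simp
    then show ?thesis using 1 unfolding tulap_piece_def by simp
  next
    case 2
    then show ?thesis using assms unfolding tulap_piece_def by (simp add: field_simps)
  next
    case 3
    have "b powi (k + 1) = b * b powi k"
      using assms power_int_add_1'[of b k] by simp
    then show ?thesis using 3 assms unfolding tulap_piece_def by (simp add: field_simps)
  qed
qed

lemma tulap_piece_cong:
  assumes "0 < b" "\<bar>t - of_int j\<bar> \<le> 1/2" "\<bar>t - of_int k\<bar> \<le> 1/2"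
  shows "tulap_piece b j (t - j) = tulap_piece b k (t - k)"
proof -
  have "of_int (j - k) < (2::real)" "of_int (k - j) < (2::real)"
    using assms(2,3) by linarith+
  then have "j = k \<or> j = k + 1 \<or> k = j + 1"
    by linarith
  then show ?thesis
  proof (elim disjE)
    assume "j = k + 1"
    then have "t - k = 1/2" "t - j = - 1/2" using assms(2,3) by auto
    then show ?thesis using tulap_piece_half[OF assms(1), of k] \<open>j = k + 1\<close> by metis
  next
    assume "k = j + 1"
    then have "t - j = 1/2" "t - k = - 1/2" using assms(2,3) by auto
    then show ?thesis using tulap_piece_half[OF assms(1), of j] \<open>k = j + 1\<close> by metis
  qed simp
qed

lemma tulap0_cdf_eq_piece:
  assumes "0 < b" "\<bar>t - of_int k\<bar> \<le> 1/2"
  shows "tulap0_cdf 0 b t = tulap_piece b k (t - k)"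
proof -
  define j where "j = nearest_int t"
  have j: "\<bar>t - of_int j\<bar> \<le> 1/2" unfolding j_def by (rule nearest_int_dist)
  have "tulap0_cdf 0 b t = tulap_piece b j (t - j)"
  proof (cases "t \<le> 0")
    case True
    then have "j \<le> 0" using j by linarith
    then show ?thesis using True unfolding tulap0_cdf_def tulap_piece_def j_def by simp
  next
    case False
    then have "0 \<le> j" using j by linarith
    then show ?thesis
      using False tulap_piece_zero[OF assms(1)] unfolding tulap0_cdf_def j_def
      by (cases "j = 0") (simp_all add: tulap_piece_def j_def)
  qed
  also have "\<dots> = tulap_piece b k (t - k)" using tulap_piece_cong[OF assms(1) j assms(2)] .
  finally show ?thesis .
qed

lemma tulap_tail_factor_bounds:
  fixes b v :: real
  assumes "0 < b" "b < 1" "0 \<le> v" "v \<le> 1" "0 \<le> j"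
  shows "0 \<le> b powi j * (b + v * (1 - b))" "b powi j * (b + v * (1 - b)) \<le> 1"
proof -
  have "0 \<le> v * (1 - b)" "v * (1 - b) \<le> 1 - b" using assms by (simp_all add: mult_left_le_one_le)
  then have "0 \<le> b + v * (1 - b)" "b + v * (1 - b) \<le> 1" using assms by linarith+
  moreover have "0 \<le> b powi j" "b powi j \<le> 1" using assms by (auto simp: power_int_le_one)
  ultimately show "0 \<le> b powi j * (b + v * (1 - b))" "b powi j * (b + v * (1 - b)) \<le> 1"
    by (auto simp: mult_le_one)
qed

lemma tulap_piece_bounds:
  assumes "0 < b" "b < 1" "\<bar>u\<bar> \<le> 1/2"
  shows "0 \<le> tulap_piece b k u \<and> tulap_piece b k u \<le> 1"
proof (cases "k \<le> 0")
  case True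
  define X where "X = b powi (- k) * (b + (u + 1/2) * (1 - b))"
  have "0 \<le> X" "X \<le> 1"
    unfolding X_def using True assms by (auto intro!: tulap_tail_factor_bounds)
  moreover have "tulap_piece b k u = X / (1 + b)"
    using True unfolding tulap_piece_def X_def by simp
  ultimately show ?thesis using assms by auto
next
  case False
  define X where "X = b powi k * (b + (1/2 - u) * (1 - b))"
  have "0 \<le> X" "X \<le> 1"
    unfolding X_def using False assms by (auto intro!: tulap_tail_factor_bounds)
  moreover have "tulap_piece b k u = 1 - X / (1 + b)"
    using False unfolding tulap_piece_def X_def by simp
  ultimately show ?thesis using assms by auto
qed

lemma tulap_piece_succ:
  assumes "0 < b" "b < 1" "\<bar>u\<bar> \<le> 1/2"
  shows "tulap_piece b (k + 1) u = dp_max_next b (tulap_piece b k u)"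
proof (cases "k \<le> -1")
  case True
  define X where "X = b powi (- (k + 1)) * (b + (u + 1/2) * (1 - b))"
  have X: "0 \<le> X" "X \<le> 1"
    unfolding X_def using True assms by (auto intro!: tulap_tail_factor_bounds)
  have "b powi (- k) = b * b powi (- (k + 1))"
    using assms power_int_add_1'[of b "- (k + 1)"] by simp
  then have "tulap_piece b k u = b * X / (1 + b)" "tulap_piece b (k + 1) u = X / (1 + b)"
    using True unfolding tulap_piece_def X_def by (simp_all add: mult.assoc)
  then show ?thesis using dp_max_next_lower_tail[OF assms(1,2) X] by simp
next
  case False
  define X where "X = b powi k * (b + (1/2 - u) * (1 - b))"
  have X: "0 \<le> X" "X \<le> 1"
    unfolding X_def using False assms by (auto intro!: tulap_tail_factor_bounds)
  have "b powi (k + 1) = b * b powi k"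
    using assms power_int_add_1'[of b k] by simp
  then have "tulap_piece b k u = 1 - X / (1 + b)" "tulap_piece b (k + 1) u = 1 - b * X / (1 + b)"
    using False tulap_piece_zero[OF assms(1), of u] unfolding tulap_piece_def X_def
    by (cases "k = 0"; simp add: mult.assoc)+
  then show ?thesis using dp_max_next_upper_tail[OF assms(1,2) X] by simp
qed

lemma tulap0_cdf_bounds:
  assumes "0 < b" "b < 1"
  shows "0 \<le> tulap0_cdf 0 b t" "tulap0_cdf 0 b t \<le> 1"
  using tulap0_cdf_eq_piece[OF assms(1) nearest_int_dist]
    tulap_piece_bounds[OF assms nearest_int_dist] by simp_all

lemma tulap0_cdf_succ:
  assumes "0 < b" "b < 1"
  shows "tulap0_cdf 0 b (t + 1) = dp_max_next b (tulap0_cdf 0 b t)"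
proof -
  define k where "k = nearest_int t"
  have k: "\<bar>t - of_int k\<bar> \<le> 1/2" unfolding k_def by (rule nearest_int_dist)
  then have "\<bar>(t + 1) - of_int (k + 1)\<bar> \<le> 1/2" by simp
  then have "tulap0_cdf 0 b (t + 1) = tulap_piece b (k + 1) (t - k)"
    using tulap0_cdf_eq_piece[OF assms(1)] by fastforce
  also have "\<dots> = dp_max_next b (tulap_piece b k (t - k))"
    using tulap_piece_succ[OF assms k] .
  also have "\<dots> = dp_max_next b (tulap0_cdf 0 b t)"
    using tulap0_cdf_eq_piece[OF assms(1) k] by simp
  finally show ?thesis .
qed

lemma tulap_cdf_no_truncation:
  assumes "0 \<le> tulap0_cdf m b x" "tulap0_cdf m b x \<le> 1"
  shows "tulap_cdf m b 0 x = tulap0_cdf m b x"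
  using assms unfolding tulap_cdf_def Let_def by simp

lemma binom_power_diff:
  "binom_power n \<theta> \<phi> - binom_power n \<theta> \<psi> = binom_power n \<theta> (\<lambda>x. \<phi> x - \<psi> x)"
  unfolding binom_power_def by (simp add: sum_subtractf algebra_simps)

lemma sum_single_crossing_nonneg:
  fixes f r d :: "nat \<Rightarrow> real"
  assumes f_nonneg: "\<And>x. x \<le> n \<Longrightarrow> 0 \<le> f x"
    and r_mono: "\<And>x y. x \<le> y \<Longrightarrow> y \<le> n \<Longrightarrow> r x \<le> r y"
    and r_nonneg: "\<And>x. x \<le> n \<Longrightarrow> 0 \<le> r x"
    and crossing: "\<And>x y. x \<le> y \<Longrightarrow> y \<le> n \<Longrightarrow> 0 \<le> d x \<Longrightarrow> 0 \<le> d y"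
    and base: "0 \<le> (\<Sum>x = 0..n. f x * d x)"
  shows "0 \<le> (\<Sum>x = 0..n. r x * f x * d x)"
proof -
  obtain k where "k \<le> n" and k: "\<And>x. x \<le> n \<Longrightarrow> 0 \<le> (r x - r k) * d x"
  proof (cases "\<exists>x\<le>n. 0 \<le> d x")
    case True
    define k where "k = (LEAST x. x \<le> n \<and> 0 \<le> d x)"
    have "k \<le> n" "0 \<le> d k" using LeastI_ex[OF True] unfolding k_def by auto
    have "0 \<le> (r x - r k) * d x" if "x \<le> n" for x
    proof (cases "x < k")
      case True
      then have "d x < 0" using not_less_Least[of x "\<lambda>x. x \<le> n \<and> 0 \<le> d x"] that unfolding k_def by auto
      moreover have "r x \<le> r k" using r_mono True \<open>k \<le> n\<close> by simp
      ultimately show ?thesis by (simp add: mult_nonpos_nonpos)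
    next
      case False
      then show ?thesis using crossing[of k x] r_mono[of k x] \<open>0 \<le> d k\<close> that by simp
    qed
    then show ?thesis using that \<open>k \<le> n\<close> by blast
  next
    case False
    have "0 \<le> (r x - r n) * d x" if "x \<le> n" for x
    proof -
      have "d x < 0" "r x \<le> r n" using False r_mono[of x n] that by auto
      then show ?thesis by (simp add: mult_nonpos_nonpos)
    qed
    then show ?thesis using that by blast
  qed
  have "(\<Sum>x = 0..n. r x * f x * d x)
      = (\<Sum>x = 0..n. (r x - r k) * d x * f x) + r k * (\<Sum>x = 0..n. f x * d x)"
    by (simp add: sum_distrib_left sum.distrib[symmetric] algebra_simps)
  also have "0 \<le> \<dots>"
    using k f_nonneg r_nonneg[OF \<open>k \<le> n\<close>] base by (intro add_nonneg_nonneg sum_nonneg) auto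
  finally show ?thesis .
qed

lemma binom_power_single_crossing_nonneg:
  assumes "0 < \<theta>0" "\<theta>0 < \<theta>1" "\<theta>1 < 1"
    and crossing: "\<And>x y. x \<le> y \<Longrightarrow> y \<le> n \<Longrightarrow> 0 \<le> d x \<Longrightarrow> 0 \<le> d y"
    and "0 \<le> binom_power n \<theta>0 d"
  shows "0 \<le> binom_power n \<theta>1 d"
proof -
  define f where "f x = real (n choose x) * \<theta>0 ^ x * (1 - \<theta>0) ^ (n - x)" for x
  define r where "r x = (\<theta>1 / \<theta>0) ^ x * ((1 - \<theta>1) / (1 - \<theta>0)) ^ (n - x)" for x
  have "real (n choose x) * \<theta>1 ^ x * (1 - \<theta>1) ^ (n - x) = r x * f x" for x
    using assms(1-3) unfolding r_def f_def by (simp add: field_simps)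
  then have "binom_power n \<theta>1 d = (\<Sum>x = 0..n. r x * f x * d x)"
    unfolding binom_power_def by simp
  also have "0 \<le> \<dots>"
  proof (rule sum_single_crossing_nonneg[OF _ _ _ crossing])
    show "0 \<le> f x" "0 \<le> r x" for x
      using assms(1-3) unfolding f_def r_def by simp_all
    show "r x \<le> r y" if "x \<le> y" "y \<le> n" for x y
      using assms(1-3) that unfolding r_def
      by (intro mult_mono power_increasing power_decreasing) auto
    show "0 \<le> (\<Sum>x = 0..n. f x * d x)"
      using assms(5) unfolding binom_power_def f_def by simp
  qed
  finally show ?thesis .
qed

lemma dp_max_next_test_most_powerful:
  assumes "0 < \<theta>0" "\<theta>0 < \<theta>1" "\<theta>1 < 1" and \<psi>_DP: "\<psi> \<in> DP_tests n \<epsilon> 0"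
    and \<phi>_step: "\<And>x. x < n \<Longrightarrow> \<phi> (x + 1) = dp_max_next (exp (- \<epsilon>)) (\<phi> x)"
    and size: "binom_power n \<theta>0 \<psi> \<le> binom_power n \<theta>0 \<phi>"
  shows "binom_power n \<theta>1 \<psi> \<le> binom_power n \<theta>1 \<phi>"
proof -
  have "0 \<le> binom_power n \<theta>1 (\<lambda>x. \<phi> x - \<psi> x)"
  proof (rule binom_power_single_crossing_nonneg[OF assms(1-3)])
    show "0 \<le> \<phi> y - \<psi> y" if "x \<le> y" "y \<le> n" "0 \<le> \<phi> x - \<psi> x" for x y
      using DP_tests_dominated[OF \<psi>_DP, of \<phi> x y] \<phi>_step that by simp
    show "0 \<le> binom_power n \<theta>0 (\<lambda>x. \<phi> x - \<psi> x)"
      using size binom_power_diff[of n \<theta>0 \<phi> \<psi>] by simp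
  qed
  then show ?thesis using binom_power_diff[of n \<theta>1 \<phi> \<psi>] by simp
qed

theorem theorem3:
  fixes \<epsilon> \<alpha> \<theta>0 \<theta>1 m :: real and n :: nat
  assumes "\<epsilon> > 0" and "0 < \<alpha>" and "\<alpha> < 1"
    and "0 < \<theta>0" and "\<theta>0 < \<theta>1" and "\<theta>1 < 1" and "n \<ge> 1"
    and "binom_power n \<theta>0 (\<lambda>x. tulap_cdf 0 (exp (- \<epsilon>)) 0 (real x - m)) = \<alpha>"
  shows "is_UMP n (DP_tests n \<epsilon> 0) {\<theta>0} {\<theta>1} \<alpha>
           (\<lambda>x. tulap_cdf 0 (exp (- \<epsilon>)) 0 (real x - m))"
proof -
  define b where "b = exp (- \<epsilon>)"
  have b: "0 < b" "b < 1" unfolding b_def using assms(1) by auto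
  define \<phi> where "\<phi> x = tulap0_cdf 0 b (real x - m)" for x
  have \<phi>_eq: "(\<lambda>x. tulap_cdf 0 (exp (- \<epsilon>)) 0 (real x - m)) = \<phi>"
    unfolding \<phi>_def b_def[symmetric] using tulap_cdf_no_truncation tulap0_cdf_bounds[OF b] by simp
  have \<phi>_step: "\<phi> (x + 1) = dp_max_next (exp (- \<epsilon>)) (\<phi> x)" for x
    using tulap0_cdf_succ[OF b, of "real x - m"] unfolding \<phi>_def b_def by (simp add: algebra_simps)
  have \<phi>_DP: "\<phi> \<in> DP_tests n \<epsilon> 0"
    using assms(1) tulap0_cdf_bounds[OF b] \<phi>_step unfolding \<phi>_def
    by (intro dp_max_next_in_DP_tests) auto
  show ?thesis
    using assms(8) \<phi>_DP dp_max_next_test_most_powerful[where \<phi> = \<phi>, OF assms(4-6) _ \<phi>_step]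
    unfolding is_UMP_def \<phi>_eq by auto
qed

end
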